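(* Let $(X,\mathcal{A},\mu,\tau,C_\tau)$ be a composition dynamical system on $\mathbb{L}^{\varphi,h}(\mu)$. Then $C_\tau$ is positively expansive if and only if for every $A\in\mathcal{A}$ with $0<\mu(A)<\infty$, $$\inf_{n\in\mathbb{N}}\ \varphi^{-1}\!\left(\frac{1}{\int_0^{\mu(\tau^{-n}(A))}h(t)\,dt}\right)=0 .$$
   Context: Let $(X,\mathcal{A},\mu)$ be a measure space. For a measurable $g$, its distribution function is $\mu_g(\lambda)=\mu\{x:|g(x)|>\lambda\}$ and its non-increasing rearrangement is $g^*(t)=\inf\{\lambda>0:\mu_g(\lambda)\le t\}$. An Orlicz function is a convex $\varphi:[0,\infty)\to[0,\infty)$ with $\varphi(0)=0$ and $\varphi(s)\to\infty$ as $s\to\infty$; here $\varphi$ is assumed continuous and strictly increasing, and $\varphi^{-1}$ denotes its inverse. A weight is a locally integrable, non-increasing function $h:[0,\mu(X))\to(0,\infty)$. The Orlicz–Lorentz space is $\mathbb{L}^{\varphi,h}(\mu)=\{g \text{ measurable}: I_{\varphi,h}(\lambda g)<\infty \text{ for some }\lambda>0\}$ with $I_{\varphi,h}(g)=\int_0^{\mu(X)}\varphi(g^*(t))h(t)\,dt$, normed by $\|g\|_{\varphi,h}=\inf\{\lambda>0: I_{\varphi,h}(g/\lambda)\le 1\}$ (functions equal a.e. identified). For $A\in\mathcal{A}$ with $0<\mu(A)<\infty$ one has $\|\chi_A\|_{\varphi,h}=1/\varphi^{-1}\big(1/\int_0^{\mu(A)}h(t)\,dt\big)$. A composition dynamical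 system $(X,\mathcal{A},\mu,\tau,C_\tau)$ means: $(X,\mathcal{A},\mu)$ is $\sigma$-finite; $\tau:X\to X$ is injective and bi-measurable; there is $M>0$ with $\mu(\tau^{-1}(A))\le M\mu(A)$ for all $A\in\mathcal{A}$; and $C_\tau g=g\circ\tau$ is the (bounded) composition operator on $\mathbb{L}^{\varphi,h}(\mu)$. A bounded operator $T$ on a Banach space $Y$ with unit sphere $S_Y$ is positively expansive if for every $y\in S_Y$ there is $n\in\mathbb{N}$ with $\|T^n y\|\ge 2$ (equivalently, $\sup_{n\in\mathbb{N}}\|T^n y\|=\infty$ for every $y\ne0$). *)

theory Defs
  imports "HOL-Analysis.Analysis"
begin

definition orlicz :: "(real \<Rightarrow> real) \<Rightarrow> bool" where
  "orlicz \<phi> \<longleftrightarrow> convex_on {0..} \<phi> \<and> \<phi> 0 = 0 \<and> filterlim \<phi> at_top at_top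
     \<and> continuous_on {0..} \<phi> \<and> strict_mono_on {0..} \<phi>"

definition orlicz_inv :: "(real \<Rightarrow> real) \<Rightarrow> real \<Rightarrow> real" where
  "orlicz_inv \<phi> y = the_inv_into {0..} \<phi> y"

text \<open>Extension of the inverse to [0,oo], with infinity mapped to infinity
  (needed for the convention 1/0 = oo).\<close>
definition orlicz_inv_ext :: "(real \<Rightarrow> real) \<Rightarrow> ennreal \<Rightarrow> ennreal" where
  "orlicz_inv_ext \<phi> y = (if y = \<infinity> then \<infinity> else ennreal (orlicz_inv \<phi> (enn2real y)))"

definition wdom :: "'a measure \<Rightarrow> real set" where
  "wdom M = {t. 0 \<le> t \<and> ennreal t < emeasure M (space M)}"

definition weight :: "'a measure \<Rightarrow> (real \<Rightarrow> real) \<Rightarrow> bool" where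
  "weight M h \<longleftrightarrow> (\<forall>t\<in>wdom M. 0 < h t)
     \<and> (\<forall>s\<in>wdom M. \<forall>t\<in>wdom M. s \<le> t \<longrightarrow> h t \<le> h s)
     \<and> (\<forall>t\<in>wdom M. set_integrable lborel {0..t} h)"

definition Wint :: "(real \<Rightarrow> real) \<Rightarrow> real \<Rightarrow> ennreal" where
  "Wint h s = (\<integral>\<^sup>+ t. ennreal (h t) * indicator {0..<s} t \<partial>lborel)"

definition distf :: "'a measure \<Rightarrow> ('a \<Rightarrow> real) \<Rightarrow> ennreal \<Rightarrow> ennreal" where
  "distf M g lam = emeasure M {x \<in> space M. lam < ennreal \<bar>g x\<bar>}"

definition rearr :: "'a measure \<Rightarrow> ('a \<Rightarrow> real) \<Rightarrow> real \<Rightarrow> ennreal" where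
  "rearr M g t = Inf {lam. 0 < lam \<and> distf M g lam \<le> ennreal t}"

definition phi_ext :: "(real \<Rightarrow> real) \<Rightarrow> ennreal \<Rightarrow> ennreal" where
  "phi_ext \<phi> x = (if x = \<infinity> then \<infinity> else ennreal (\<phi> (enn2real x)))"

definition modular :: "'a measure \<Rightarrow> (real \<Rightarrow> real) \<Rightarrow> (real \<Rightarrow> real) \<Rightarrow> ('a \<Rightarrow> real) \<Rightarrow> ennreal" where
  "modular M \<phi> h g =
     (\<integral>\<^sup>+ t. phi_ext \<phi> (rearr M g t) * ennreal (h t) * indicator (wdom M) t \<partial>lborel)"

definition OL_space :: "'a measure \<Rightarrow> (real \<Rightarrow> real) \<Rightarrow> (real \<Rightarrow> real) \<Rightarrow> ('a \<Rightarrow> real) set" where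
  "OL_space M \<phi> h = {g \<in> borel_measurable M. \<exists>lam>0. modular M \<phi> h (\<lambda>x. lam * g x) < \<infinity>}"

definition OL_norm :: "'a measure \<Rightarrow> (real \<Rightarrow> real) \<Rightarrow> (real \<Rightarrow> real) \<Rightarrow> ('a \<Rightarrow> real) \<Rightarrow> real" where
  "OL_norm M \<phi> h g = Inf {lam. 0 < lam \<and> modular M \<phi> h (\<lambda>x. g x / lam) \<le> 1}"

definition comp_dyn_system ::
  "'a measure \<Rightarrow> (real \<Rightarrow> real) \<Rightarrow> (real \<Rightarrow> real) \<Rightarrow> ('a \<Rightarrow> 'a) \<Rightarrow> bool" where
  "comp_dyn_system M \<phi> h \<tau> \<longleftrightarrow>
     sigma_finite_measure M \<and> orlicz \<phi> \<and> weight M h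
     \<and> inj_on \<tau> (space M) \<and> \<tau> \<in> M \<rightarrow>\<^sub>M M \<and> (\<forall>A\<in>sets M. \<tau> ` A \<in> sets M)
     \<and> (\<exists>c>0. \<forall>A\<in>sets M. emeasure M (\<tau> -` A \<inter> space M) \<le> ennreal c * emeasure M A)
     \<and> (\<exists>K. \<forall>g\<in>OL_space M \<phi> h. (\<lambda>x. g (\<tau> x)) \<in> OL_space M \<phi> h
            \<and> OL_norm M \<phi> h (\<lambda>x. g (\<tau> x)) \<le> K * OL_norm M \<phi> h g)"

definition comp_pos_expansive ::
  "'a measure \<Rightarrow> (real \<Rightarrow> real) \<Rightarrow> (real \<Rightarrow> real) \<Rightarrow> ('a \<Rightarrow> 'a) \<Rightarrow> bool" where
  "comp_pos_expansive M \<phi> h \<tau> \<longleftrightarrow>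
     (\<forall>g\<in>OL_space M \<phi> h. OL_norm M \<phi> h g = 1 \<longrightarrow>
        (\<exists>n::nat. OL_norm M \<phi> h (\<lambda>x. g ((\<tau> ^^ n) x)) \<ge> 2))"

end

theory Submission
  imports Defs
begin

text \<open>
  Write \<open>\<psi>(B) = \<phi>\<^sup>-\<^sup>1(1 / W(\<mu> B))\<close> with \<open>W(s) = \<integral>\<^sub>0\<^sup>s h\<close>. For \<open>B\<close> of finite measure the Luxemburg
  norm of a scaled indicator is explicit, \<open>\<parallel>a \<chi>\<^sub>B\<parallel> = a / \<psi>(B)\<close>, and \<open>C\<^sub>\<tau>\<^sup>n\<close> maps \<open>\<chi>\<^sub>B\<close> to
  \<open>\<chi>\<^bsub>\<tau>\<^sup>-\<^sup>n B\<^esub>\<close>. If \<open>C\<^sub>\<tau>\<close> is positively expansive, applying the definition to the unit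
  vector \<open>\<psi>(B) \<chi>\<^sub>B\<close> shows that every finite \<open>\<psi>(\<tau>\<^sup>-\<^sup>n A)\<close> is at least halved at some later
  time, so the infimum over \<open>n\<close> is \<open>0\<close>. Conversely, a unit vector \<open>g\<close> satisfies \<open>\<bar>g\<bar> > e\<close> on
  some \<open>A\<close> of finite positive measure (by \<open>\<sigma>\<close>-finiteness), hence
  \<open>\<parallel>C\<^sub>\<tau>\<^sup>n g\<parallel> \<ge> e \<parallel>\<chi>\<^bsub>\<tau>\<^sup>-\<^sup>n A\<^esub>\<parallel> = e / \<psi>(\<tau>\<^sup>-\<^sup>n A)\<close>, which is at least \<open>2\<close> as soon as
  \<open>\<psi>(\<tau>\<^sup>-\<^sup>n A) \<le> e / 2\<close>.
\<close>

section \<open>Orlicz functions\<close>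

lemma orlicz_nonneg:
  assumes "orlicz \<phi>" "0 \<le> x"
  shows "0 \<le> \<phi> x"
  using strict_mono_on_leD[of "{0..}" \<phi> 0 x] assms by (auto simp: orlicz_def)

lemma orlicz_image:
  assumes "orlicz \<phi>"
  shows "\<phi> ` {0..} = {0..}"
proof (intro antisym subsetI)
  fix y :: real assume "y \<in> {0..}"
  obtain X where X: "\<And>x. x \<ge> X \<Longrightarrow> y \<le> \<phi> x"
    using assms by (auto simp: orlicz_def filterlim_at_top eventually_at_top_linorder)
  have "continuous_on {0..max X 0} \<phi>"
    using assms by (auto simp: orlicz_def intro: continuous_on_subset)
  then obtain x where "0 \<le> x" "\<phi> x = y"
    using IVT'[of \<phi> 0 y "max X 0"] X[of "max X 0"] \<open>y \<in> {0..}\<close> assms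
    by (auto simp: orlicz_def)
  then show "y \<in> \<phi> ` {0..}" by auto
qed (use assms orlicz_nonneg in auto)

lemma orlicz_inv:
  assumes "orlicz \<phi>" "0 \<le> y"
  shows "0 \<le> orlicz_inv \<phi> y" "\<phi> (orlicz_inv \<phi> y) = y"
proof -
  have "inj_on \<phi> {0..}"
    using assms(1) by (auto simp: orlicz_def intro: strict_mono_on_imp_inj_on)
  then show "0 \<le> orlicz_inv \<phi> y" "\<phi> (orlicz_inv \<phi> y) = y"
    using assms orlicz_image[OF assms(1)] the_inv_into_into[of \<phi> "{0..}" y "{0..}"]
    by (auto simp: orlicz_inv_def f_the_inv_into_f)
qed

lemma orlicz_le_iff_le_inv:
  assumes "orlicz \<phi>" "0 \<le> x" "0 \<le> y"
  shows "\<phi> x \<le> y \<longleftrightarrow> x \<le> orlicz_inv \<phi> y"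
  using strict_mono_on_less_eq[of "{0..}" \<phi> x "orlicz_inv \<phi> y"] orlicz_inv[OF assms(1,3)] assms
  by (auto simp: orlicz_def)

lemma orlicz_inv_pos:
  assumes "orlicz \<phi>" "0 < y"
  shows "0 < orlicz_inv \<phi> y"
  using orlicz_inv[OF assms(1), of y] assms by (cases "orlicz_inv \<phi> y = 0") (auto simp: orlicz_def)

lemma orlicz_scale_le:
  assumes "orlicz \<phi>" "0 \<le> s" "s \<le> 1" "0 \<le> x"
  shows "\<phi> (s * x) \<le> s * \<phi> x"
  using convex_onD[of "{0..}" \<phi> s 0 x] assms by (auto simp: orlicz_def)

lemma phi_ext_mono:
  assumes "orlicz \<phi>" "x \<le> y"
  shows "phi_ext \<phi> x \<le> phi_ext \<phi> y"
proof (cases "y = \<infinity>")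
  case False
  then have "x \<noteq> \<infinity>" "enn2real x \<le> enn2real y"
    using assms(2) by (auto simp: top_unique enn2real_mono top.not_eq_extremum)
  then show ?thesis
    using False strict_mono_on_leD[of "{0..}" \<phi> "enn2real x" "enn2real y"] assms(1)
    by (auto simp: phi_ext_def orlicz_def intro: ennreal_leI)
qed (simp add: phi_ext_def)

lemma phi_ext_scale_le:
  assumes "orlicz \<phi>" "0 < s" "s \<le> 1"
  shows "phi_ext \<phi> (ennreal s * y) \<le> ennreal s * phi_ext \<phi> y"
proof (cases y)
  case (real r)
  then have "ennreal (\<phi> (s * r)) \<le> ennreal (s * \<phi> r)"
    using orlicz_scale_le[OF assms(1), of s r] assms by (auto intro: ennreal_leI)
  then show ?thesis
    using real assms orlicz_nonneg[OF assms(1), of r]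
    by (simp add: phi_ext_def ennreal_mult[symmetric])
qed (use assms in \<open>simp add: phi_ext_def ennreal_mult_top\<close>)

section \<open>The modular and the Luxemburg norm\<close>

lemma ennreal_inverse_mult_self:
  fixes c :: ennreal
  assumes "c \<noteq> 0" "c \<noteq> top"
  shows "inverse c * c = 1"
  using assms by (cases c) (auto simp: inverse_ennreal ennreal_mult[symmetric])

lemma nn_integral_cmult_le: "c * integral\<^sup>N M f \<le> (\<integral>\<^sup>+x. c * f x \<partial>M)"
  unfolding nn_integral_def SUP_mult_left_ennreal
proof (rule SUP_least)
  fix g assume g: "g \<in> {g. simple_function M g \<and> g \<le> f}"
  then have "simple_function M (\<lambda>x. c * g x) \<and> (\<lambda>x. c * g x) \<le> (\<lambda>x. c * f x)"
    by (auto intro: simple_function_mult simple_function_const mult_left_mono simp: le_fun_def)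
  then show "c * integral\<^sup>S M g \<le> (SUP g \<in> {g. simple_function M g \<and> g \<le> (\<lambda>x. c * f x)}. integral\<^sup>S M g)"
    using g by (auto intro!: SUP_upper2[of "\<lambda>x. c * g x"])
qed

text \<open>Unlike \<open>nn_integral_cmult\<close>, this needs no measurability of \<open>f\<close>: the integrand of
  \<open>modular\<close> is not known to be measurable.\<close>
lemma nn_integral_cmult_nonzero_finite:
  fixes c :: ennreal
  assumes "c \<noteq> 0" "c \<noteq> top"
  shows "(\<integral>\<^sup>+x. c * f x \<partial>M) = c * integral\<^sup>N M f"
proof (rule antisym)
  have "inverse c * (\<integral>\<^sup>+x. c * f x \<partial>M) \<le> integral\<^sup>N M f"
    using nn_integral_cmult_le[of "inverse c" M "\<lambda>x. c * f x"]
    by (simp add: mult.assoc[symmetric] ennreal_inverse_mult_self[OF assms])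
  then have "c * (inverse c * (\<integral>\<^sup>+x. c * f x \<partial>M)) \<le> c * integral\<^sup>N M f"
    by (rule mult_left_mono) simp
  then show "(\<integral>\<^sup>+x. c * f x \<partial>M) \<le> c * integral\<^sup>N M f"
    by (simp add: mult.assoc[symmetric] mult.commute[of c] ennreal_inverse_mult_self[OF assms])
qed (rule nn_integral_cmult_le)

lemma distf_cong: "(\<And>x. x \<in> space M \<Longrightarrow> f x = g x) \<Longrightarrow> distf M f = distf M g"
  unfolding distf_def by (intro ext arg_cong[where f="emeasure M"]) auto

lemma modular_cong: "(\<And>x. x \<in> space M \<Longrightarrow> f x = g x) \<Longrightarrow> modular M \<phi> h f = modular M \<phi> h g"
  unfolding modular_def rearr_def by (simp add: distf_cong[of M f g])

lemma OL_norm_cong: "(\<And>x. x \<in> space M \<Longrightarrow> f x = g x) \<Longrightarrow> OL_norm M \<phi> h f = OL_norm M \<phi> h g"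
  unfolding OL_norm_def
  by (intro arg_cong[where f=Inf] Collect_cong conj_cong refl arg_cong2[where f="(\<le>)"] modular_cong) auto

lemma rearr_mono:
  assumes "g \<in> borel_measurable M" "\<And>x. x \<in> space M \<Longrightarrow> \<bar>f x\<bar> \<le> \<bar>g x\<bar>"
  shows "rearr M f t \<le> rearr M g t"
proof -
  have distf_le: "distf M f lam \<le> distf M g lam" for lam
    unfolding distf_def
    using assms by (intro emeasure_mono) (auto intro: order.strict_trans2 ennreal_leI)
  show ?thesis
    unfolding rearr_def by (rule Inf_superset_mono) (auto intro: order.trans[OF distf_le])
qed

lemma modular_mono:
  assumes "orlicz \<phi>" "g \<in> borel_measurable M" "\<And>x. x \<in> space M \<Longrightarrow> \<bar>f x\<bar> \<le> \<bar>g x\<bar>"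
  shows "modular M \<phi> h f \<le> modular M \<phi> h g"
  unfolding modular_def
  using assms by (intro nn_integral_mono mult_right_mono phi_ext_mono rearr_mono) auto

lemma rearr_scale_le:
  assumes "0 < s"
  shows "rearr M (\<lambda>x. s * f x) t \<le> ennreal s * rearr M f t"
proof -
  have s: "ennreal s \<noteq> 0" "ennreal s \<noteq> top" using assms by auto
  have distf_scale: "distf M (\<lambda>x. s * f x) (ennreal s * lam) = distf M f lam" for lam
    using assms ennreal_mult_le_mult_iff[OF s]
    by (simp add: distf_def abs_mult ennreal_mult not_le[symmetric])
  let ?R = "rearr M (\<lambda>x. s * f x) t"
  have "inverse (ennreal s) * ?R \<le> rearr M f t"
    unfolding rearr_def[of M f]
  proof (rule Inf_greatest)
    fix lam assume "lam \<in> {lam. 0 < lam \<and> distf M f lam \<le> ennreal t}"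
    then have "?R \<le> ennreal s * lam"
      unfolding rearr_def using assms distf_scale
      by (intro Inf_lower) (auto simp: ennreal_zero_less_mult_iff)
    then have "inverse (ennreal s) * ?R \<le> inverse (ennreal s) * (ennreal s * lam)"
      by (rule mult_left_mono) simp
    then show "inverse (ennreal s) * ?R \<le> lam"
      by (simp add: mult.assoc[symmetric] ennreal_inverse_mult_self[OF s])
  qed
  then have "ennreal s * (inverse (ennreal s) * ?R) \<le> ennreal s * rearr M f t"
    by (rule mult_left_mono) simp
  then show ?thesis
    by (simp add: mult.assoc[symmetric] mult.commute[of "ennreal s"] ennreal_inverse_mult_self[OF s])
qed

lemma modular_scale_le:
  assumes "orlicz \<phi>" "0 < s" "s \<le> 1"
  shows "modular M \<phi> h (\<lambda>x. s * f x) \<le> ennreal s * modular M \<phi> h f"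
proof -
  have "phi_ext \<phi> (rearr M (\<lambda>x. s * f x) t) \<le> ennreal s * phi_ext \<phi> (rearr M f t)" for t
    using phi_ext_mono[OF assms(1) rearr_scale_le[OF assms(2)]] phi_ext_scale_le[OF assms]
    by (rule order.trans)
  then have "modular M \<phi> h (\<lambda>x. s * f x) \<le>
      (\<integral>\<^sup>+ t. ennreal s * (phi_ext \<phi> (rearr M f t) * ennreal (h t) * indicator (wdom M) t) \<partial>lborel)"
    unfolding modular_def mult.assoc[symmetric]
    by (intro nn_integral_mono mult_right_mono) auto
  also have "\<dots> = ennreal s * modular M \<phi> h f"
    unfolding modular_def using assms by (intro nn_integral_cmult_nonzero_finite) auto
  finally show ?thesis .
qed

lemma rearr_indicator:
  assumes "B \<subseteq> space M" "0 < b"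
  shows "rearr M (\<lambda>x. b * indicator B x) t = (if ennreal t < emeasure M B then ennreal b else 0)"
proof -
  have distf_ind: "distf M (\<lambda>x. b * indicator B x) lam = (if lam < ennreal b then emeasure M B else 0)" for lam
    using assms unfolding distf_def by (auto simp: indicator_def intro: arg_cong[where f="emeasure M"])
  show ?thesis
  proof (cases "ennreal t < emeasure M B")
    case True
    then have "{lam. 0 < lam \<and> distf M (\<lambda>x. b * indicator B x) lam \<le> ennreal t} = {ennreal b..}"
      using assms by (auto simp: distf_ind not_less intro: order.strict_trans2[of 0 "ennreal b"])
    then show ?thesis using True unfolding rearr_def by simp
  next
    case False
    then have "{lam. 0 < lam \<and> distf M (\<lambda>x. b * indicator B x) lam \<le> ennreal t} = {0<..}"
      by (auto simp: distf_ind not_less)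
    then show ?thesis using False unfolding rearr_def by simp
  qed
qed

lemma OL_space_modular_le_1:
  assumes "orlicz \<phi>" "f \<in> OL_space M \<phi> h"
  shows "\<exists>lam>0. modular M \<phi> h (\<lambda>x. f x / lam) \<le> 1"
proof -
  obtain l m where l: "0 < l" "modular M \<phi> h (\<lambda>x. l * f x) = ennreal m" "0 \<le> m"
    using assms(2) unfolding OL_space_def by (auto simp: less_top_ennreal)
  define s where "s = 1 / (m + 1)"
  have s: "0 < s" "s \<le> 1" using l(3) by (auto simp: s_def)
  have "modular M \<phi> h (\<lambda>x. s * (l * f x)) \<le> ennreal s * ennreal m"
    using modular_scale_le[OF assms(1) s, of M h "\<lambda>x. l * f x"] l(2) by simp
  also have "\<dots> \<le> 1"
    using l(3) s by (simp add: ennreal_mult[symmetric] s_def)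
  finally have "modular M \<phi> h (\<lambda>x. f x / (1 / (s * l))) \<le> 1"
    by (simp add: ac_simps)
  then show ?thesis using s l by (intro exI[of _ "1 / (s * l)"]) auto
qed

lemma OL_norm_mono:
  assumes "orlicz \<phi>" "g \<in> OL_space M \<phi> h" "\<And>x. x \<in> space M \<Longrightarrow> \<bar>f x\<bar> \<le> \<bar>g x\<bar>"
  shows "OL_norm M \<phi> h f \<le> OL_norm M \<phi> h g"
  unfolding OL_norm_def
proof (rule cInf_superset_mono)
  show "{lam. 0 < lam \<and> modular M \<phi> h (\<lambda>x. g x / lam) \<le> 1} \<noteq> {}"
    using OL_space_modular_le_1[OF assms(1,2)] by auto
  have "modular M \<phi> h (\<lambda>x. f x / lam) \<le> modular M \<phi> h (\<lambda>x. g x / lam)" for lam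
    using assms by (intro modular_mono) (auto simp: OL_space_def abs_divide divide_right_mono)
  then show "{lam. 0 < lam \<and> modular M \<phi> h (\<lambda>x. g x / lam) \<le> 1}
      \<subseteq> {lam. 0 < lam \<and> modular M \<phi> h (\<lambda>x. f x / lam) \<le> 1}"
    by (auto intro: order.trans)
qed (auto intro: bdd_belowI[of _ 0])

lemma OL_norm_eq_0_if_null:
  assumes "orlicz \<phi>" "g \<in> borel_measurable M" "emeasure M {x \<in> space M. g x \<noteq> 0} = 0"
  shows "OL_norm M \<phi> h g = 0"
proof -
  have null: "{x \<in> space M. g x \<noteq> 0} \<in> sets M" using assms(2) by measurable
  have "distf M (\<lambda>x. g x / lam) l = 0" for l lam
  proof -
    have "distf M (\<lambda>x. g x / lam) l \<le> emeasure M {x \<in> space M. g x \<noteq> 0}"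
      unfolding distf_def by (intro emeasure_mono[OF _ null]) auto
    then show ?thesis using assms(3) by simp
  qed
  then have "{l. 0 < l \<and> distf M (\<lambda>x. g x / lam) l \<le> ennreal t} = {0<..}" for t lam
    by auto
  then have "rearr M (\<lambda>x. g x / lam) t = 0" for t lam
    unfolding rearr_def by simp
  then have "modular M \<phi> h (\<lambda>x. g x / lam) = 0" for lam
    using assms(1) by (simp add: modular_def phi_ext_def orlicz_def)
  then have "{lam. 0 < lam \<and> modular M \<phi> h (\<lambda>x. g x / lam) \<le> 1} = {0<..}"
    by auto
  then show ?thesis unfolding OL_norm_def by simp
qed

section \<open>Norms of indicator functions\<close>

lemma atLeastLessThan_subset_wdom:
  assumes "ennreal s \<le> emeasure M (space M)"
  shows "{0..<s} \<subseteq> wdom M"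
proof
  fix t assume "t \<in> {0..<s}"
  then have "ennreal t < ennreal s" by (simp add: ennreal_less_iff)
  then show "t \<in> wdom M" using \<open>t \<in> {0..<s}\<close> assms by (auto simp: wdom_def)
qed

lemma Wint_finite:
  assumes "weight M h" "0 \<le> s" "ennreal s \<le> emeasure M (space M)"
  shows "Wint h s < \<infinity>"
proof (cases "s = 0")
  case False
  have dom: "{0..<s} \<subseteq> wdom M" "0 \<in> wdom M"
    using assms False atLeastLessThan_subset_wdom by fastforce+
  have "ennreal (h t) * indicator {0..<s} t \<le> ennreal (h 0) * indicator {0..<s} t" for t
    using assms(1) dom by (cases "t \<in> {0..<s}") (auto simp: weight_def intro!: ennreal_leI)
  then have "Wint h s \<le> (\<integral>\<^sup>+ t. ennreal (h 0) * indicator {0..<s} t \<partial>lborel)"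
    unfolding Wint_def by (intro nn_integral_mono) auto
  also have "\<dots> = ennreal (h 0) * ennreal s" using assms(2) by (simp add: nn_integral_cmult_indicator)
  also have "\<dots> < \<infinity>" by (simp add: ennreal_mult_less_top)
  finally show ?thesis .
qed (simp add: Wint_def)

lemma Wint_nonzero:
  assumes "weight M h" "0 < s" "ennreal s \<le> emeasure M (space M)"
  shows "Wint h s \<noteq> 0"
proof -
  have dom: "{0..<s} \<subseteq> wdom M" "s/2 \<in> wdom M"
    using assms atLeastLessThan_subset_wdom by fastforce+
  have "ennreal (h (s/2)) * indicator {0..<s/2} t \<le> ennreal (h t) * indicator {0..<s} t" for t
    using assms(1) dom by (cases "t \<in> {0..<s/2}") (auto simp: weight_def subset_iff intro!: ennreal_leI)
  then have "(\<integral>\<^sup>+ t. ennreal (h (s/2)) * indicator {0..<s/2} t \<partial>lborel) \<le> Wint h s"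
    unfolding Wint_def by (intro nn_integral_mono) auto
  moreover have "0 < h (s/2)" using assms(1) dom(2) by (simp add: weight_def)
  then have "(\<integral>\<^sup>+ t. ennreal (h (s/2)) * indicator {0..<s/2} t \<partial>lborel) \<noteq> 0"
    using assms(2) by (simp add: nn_integral_cmult_indicator ennreal_mult[symmetric])
  ultimately show ?thesis by (metis le_zero_eq)
qed

lemma modular_indicator:
  assumes "orlicz \<phi>" "B \<in> sets M" "emeasure M B < \<infinity>" "0 < b"
  shows "modular M \<phi> h (\<lambda>x. b * indicator B x) = ennreal (\<phi> b) * Wint h (enn2real (emeasure M B))"
proof -
  define s where "s = enn2real (emeasure M B)"
  have B: "B \<subseteq> space M" "emeasure M B = ennreal s" "0 \<le> s"
    using assms sets.sets_into_space by (auto simp: s_def ennreal_enn2real_if)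
  then have "{0..<s} \<subseteq> wdom M"
    using emeasure_space[of M B] by (intro atLeastLessThan_subset_wdom) simp
  moreover have "rearr M (\<lambda>x. b * indicator B x) t = (if t < s then ennreal b else 0)" if "0 \<le> t" for t
    using rearr_indicator[OF B(1) assms(4)] B that by (simp add: ennreal_less_iff)
  ultimately have "phi_ext \<phi> (rearr M (\<lambda>x. b * indicator B x) t) * ennreal (h t) * indicator (wdom M) t
       = ennreal (\<phi> b) * (ennreal (h t) * indicator {0..<s} t)" for t
    using assms(1,4) by (auto simp: wdom_def phi_ext_def orlicz_def indicator_def subset_iff)
  then have "modular M \<phi> h (\<lambda>x. b * indicator B x) =
      (\<integral>\<^sup>+ t. ennreal (\<phi> b) * (ennreal (h t) * indicator {0..<s} t) \<partial>lborel)"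
    unfolding modular_def by simp
  also have "\<dots> = ennreal (\<phi> b) * Wint h s"
    unfolding Wint_def
    using strict_mono_onD[of "{0..}" \<phi> 0 b] assms(1,4)
    by (intro nn_integral_cmult_nonzero_finite) (auto simp: orlicz_def)
  finally show ?thesis by (simp add: s_def)
qed

text \<open>The quantity \<open>\<psi>(B)\<close> of the theorem; it equals \<open>1 / \<parallel>\<chi>\<^sub>B\<parallel>\<close> by \<open>OL_norm_indicator\<close>
  and is \<open>\<infinity>\<close> when \<open>W(\<mu> B) = 0\<close>.\<close>
definition recip_norm_indicator :: "'a measure \<Rightarrow> (real \<Rightarrow> real) \<Rightarrow> (real \<Rightarrow> real) \<Rightarrow> 'a set \<Rightarrow> ennreal"
  where "recip_norm_indicator M \<phi> h B = orlicz_inv_ext \<phi> (1 / Wint h (enn2real (emeasure M B)))"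

lemma recip_norm_indicator_cases:
  assumes "weight M h" "B \<in> sets M" "emeasure M B < \<infinity>"
  obtains "Wint h (enn2real (emeasure M B)) = 0" "recip_norm_indicator M \<phi> h B = \<infinity>"
  | w where "0 < w" "Wint h (enn2real (emeasure M B)) = ennreal w"
      "recip_norm_indicator M \<phi> h B = ennreal (orlicz_inv \<phi> (1 / w))"
proof -
  have "Wint h (enn2real (emeasure M B)) < \<infinity>"
    using assms emeasure_space[of M B] by (intro Wint_finite) (auto simp: ennreal_enn2real_if)
  then obtain w where "Wint h (enn2real (emeasure M B)) = ennreal w" "0 \<le> w"
    by (cases "Wint h (enn2real (emeasure M B))") auto
  moreover have "1 / ennreal w = ennreal (1 / w)" if "0 < w"
    using divide_ennreal[of 1 w] that by simp
  ultimately show thesis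
    using that by (cases "w = 0") (auto simp: recip_norm_indicator_def orlicz_inv_ext_def)
qed

lemma recip_norm_indicator_pos:
  assumes "orlicz \<phi>" "weight M h" "B \<in> sets M" "emeasure M B < \<infinity>"
  shows "0 < recip_norm_indicator M \<phi> h B"
  using assms(2-4) by (cases rule: recip_norm_indicator_cases[where \<phi>=\<phi>]) (auto intro: orlicz_inv_pos[OF assms(1)])

lemma recip_norm_indicator_finite:
  assumes "weight M h" "B \<in> sets M" "0 < emeasure M B" "emeasure M B < \<infinity>"
  shows "recip_norm_indicator M \<phi> h B < \<infinity>"
  using assms(1,2,4)
proof (cases rule: recip_norm_indicator_cases[where \<phi>=\<phi>])
  case 1
  moreover have "Wint h (enn2real (emeasure M B)) \<noteq> 0"
    using assms emeasure_space[of M B]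
    by (intro Wint_nonzero) (auto simp: enn2real_positive_iff ennreal_enn2real_if)
  ultimately show ?thesis by simp
qed simp

lemma ennreal_orlicz_mult_le_1_iff:
  assumes "orlicz \<phi>" "0 < w" "0 \<le> x"
  shows "ennreal (\<phi> x) * ennreal w \<le> 1 \<longleftrightarrow> x \<le> orlicz_inv \<phi> (1 / w)"
proof -
  have "ennreal (\<phi> x) * ennreal w \<le> 1 \<longleftrightarrow> \<phi> x * w \<le> 1"
    using orlicz_nonneg[OF assms(1,3)] assms(2) by (simp add: ennreal_mult[symmetric])
  also have "\<dots> \<longleftrightarrow> \<phi> x \<le> 1 / w"
    using assms(2) by (simp add: pos_le_divide_eq)
  also have "\<dots> \<longleftrightarrow> x \<le> orlicz_inv \<phi> (1 / w)"
    using assms by (intro orlicz_le_iff_le_inv) auto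
  finally show ?thesis .
qed

lemma OL_norm_indicator:
  assumes "orlicz \<phi>" "weight M h" "B \<in> sets M" "emeasure M B < \<infinity>" "0 < a"
  shows "ennreal (OL_norm M \<phi> h (\<lambda>x. a * indicator B x)) = ennreal a / recip_norm_indicator M \<phi> h B"
proof -
  let ?L = "{lam. 0 < lam \<and> modular M \<phi> h (\<lambda>x. a * indicator B x / lam) \<le> 1}"
  have modular: "modular M \<phi> h (\<lambda>x. a * indicator B x / lam)
      = ennreal (\<phi> (a / lam)) * Wint h (enn2real (emeasure M B))" if "0 < lam" for lam
    using modular_indicator[OF assms(1,3,4), of "a / lam" h] that assms(5) by simp
  from assms(2-4) show ?thesis
  proof (cases rule: recip_norm_indicator_cases[where \<phi>=\<phi>])
    case 1
    then have "?L = {0<..}" using modular by auto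
    then show ?thesis using 1 by (simp add: OL_norm_def)
  next
    case (2 w)
    define c where "c = orlicz_inv \<phi> (1 / w)"
    have "0 < c" using orlicz_inv_pos[OF assms(1)] 2 by (simp add: c_def)
    have threshold: "0 < lam \<and> a / lam \<le> c \<longleftrightarrow> a / c \<le> lam" for lam
    proof
      assume "a / c \<le> lam"
      moreover have "0 < a / c" using \<open>0 < c\<close> assms(5) by simp
      ultimately have "0 < lam" by linarith
      then show "0 < lam \<and> a / lam \<le> c"
        using \<open>a / c \<le> lam\<close> \<open>0 < c\<close> by (auto simp: field_simps)
    qed (use \<open>0 < c\<close> in \<open>auto simp: field_simps\<close>)
    have "?L = {lam. 0 < lam \<and> a / lam \<le> c}"
    proof (intro Collect_cong conj_cong refl)
      fix lam :: real assume "0 < lam"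
      then show "modular M \<phi> h (\<lambda>x. a * indicator B x / lam) \<le> 1 \<longleftrightarrow> a / lam \<le> c"
        using modular ennreal_orlicz_mult_le_1_iff[OF assms(1) 2(1), of "a / lam"] 2 assms(5)
        by (simp add: c_def)
    qed
    also have "\<dots> = {a / c..}" using threshold by auto
    finally show ?thesis
      using 2 \<open>0 < c\<close> assms(5) by (simp add: OL_norm_def c_def divide_ennreal)
  qed
qed

lemma indicator_in_OL_space:
  assumes "orlicz \<phi>" "B \<in> sets M" "emeasure M B < \<infinity>" "weight M h" "0 < a"
  shows "(\<lambda>x. a * indicator B x) \<in> OL_space M \<phi> h"
proof -
  have "Wint h (enn2real (emeasure M B)) < \<infinity>"
    using assms emeasure_space[of M B] by (intro Wint_finite) (auto simp: ennreal_enn2real_if)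
  then have "modular M \<phi> h (\<lambda>x. 1 * (a * indicator B x)) < \<infinity>"
    using modular_indicator[OF assms(1-3,5)] by (simp add: ennreal_mult_less_top)
  then show ?thesis using assms(2) by (auto simp: OL_space_def intro!: exI[of _ 1])
qed

section \<open>Composition dynamical systems\<close>

lemma (in sigma_finite_measure) exists_finite_set_abs_gt:
  fixes g :: "'a \<Rightarrow> real"
  assumes "g \<in> borel_measurable M" "emeasure M {x \<in> space M. g x \<noteq> 0} \<noteq> 0"
  obtains A e where "A \<in> sets M" "0 < emeasure M A" "emeasure M A < \<infinity>" "0 < e"
    "\<And>x. x \<in> A \<Longrightarrow> e < \<bar>g x\<bar>"
proof -
  obtain F :: "nat \<Rightarrow> 'a set" where F: "range F \<subseteq> sets M" "(\<Union>i. F i) = space M"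
    "\<And>i. emeasure M (F i) \<noteq> \<infinity>" "incseq F"
    using sigma_finite_incseq by blast
  define E where "E k = F k \<inter> {x \<in> space M. 1 / real (Suc k) < \<bar>g x\<bar>}" for k
  have E_sets: "range E \<subseteq> sets M" using F(1) assms(1) by (auto simp: E_def)
  have "incseq E"
  proof (rule incseq_SucI)
    fix k
    have "1 / real (Suc (Suc k)) \<le> 1 / real (Suc k)" by (simp add: frac_le)
    then show "E k \<subseteq> E (Suc k)"
      using incseq_SucD[OF F(4), of k] by (auto simp: E_def)
  qed
  have "(\<Union>k. E k) = {x \<in> space M. g x \<noteq> 0}"
  proof (intro antisym subsetI)
    fix x assume x: "x \<in> {x \<in> space M. g x \<noteq> 0}"
    then obtain i where "x \<in> F i" using F(2) by auto
    obtain j where "1 / real (Suc j) < \<bar>g x\<bar>"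
      using x reals_Archimedean[of "\<bar>g x\<bar>"] by (auto simp: field_simps)
    moreover have "1 / real (Suc (max i j)) \<le> 1 / real (Suc j)"
      by (intro divide_left_mono) auto
    ultimately have "x \<in> E (max i j)"
      using \<open>x \<in> F i\<close> x monoD[OF F(4), of i "max i j"] by (auto simp: E_def)
    then show "x \<in> (\<Union>k. E k)" by blast
  qed (auto simp: E_def)
  then have "(\<lambda>k. emeasure M (E k)) \<longlonglongrightarrow> emeasure M {x \<in> space M. g x \<noteq> 0}"
    using Lim_emeasure_incseq[OF E_sets \<open>incseq E\<close>] by simp
  moreover have "0 < emeasure M {x \<in> space M. g x \<noteq> 0}"
    using assms(2) by (simp add: zero_less_iff_neq_zero)
  ultimately have "eventually (\<lambda>k. 0 < emeasure M (E k)) sequentially"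
    by (rule order_tendstoD(1))
  then obtain k where "0 < emeasure M (E k)"
    by (auto simp: eventually_sequentially)
  moreover have "emeasure M (E k) < \<infinity>"
    using emeasure_mono[of "E k" "F k" M] F(1,3) by (auto simp: E_def less_top intro: le_less_trans)
  ultimately show thesis
    using that[of "E k" "1 / real (Suc k)"] E_sets by (auto simp: E_def)
qed

lemma comp_dyn_systemD:
  assumes "comp_dyn_system M \<phi> h \<tau>"
  shows "sigma_finite_measure M" "orlicz \<phi>" "weight M h" "\<tau> \<in> M \<rightarrow>\<^sub>M M"
    "\<exists>c>0. \<forall>A\<in>sets M. emeasure M (\<tau> -` A \<inter> space M) \<le> ennreal c * emeasure M A"
    "\<And>g. g \<in> OL_space M \<phi> h \<Longrightarrow> (\<lambda>x. g (\<tau> x)) \<in> OL_space M \<phi> h"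
  using assms unfolding comp_dyn_system_def by blast+

lemma funpow_vimage_add:
  assumes "\<tau> \<in> M \<rightarrow>\<^sub>M M"
  shows "(\<tau> ^^ (n + m)) -` A \<inter> space M = (\<tau> ^^ m) -` ((\<tau> ^^ n) -` A \<inter> space M) \<inter> space M"
  using measurable_space[OF measurable_compose_n[OF assms]] by (auto simp: funpow_add)

lemma emeasure_funpow_vimage_le:
  assumes "\<tau> \<in> M \<rightarrow>\<^sub>M M" "0 < c"
    and "\<forall>A\<in>sets M. emeasure M (\<tau> -` A \<inter> space M) \<le> ennreal c * emeasure M A"
    and "A \<in> sets M"
  shows "emeasure M ((\<tau> ^^ n) -` A \<inter> space M) \<le> ennreal (c ^ n) * emeasure M A"
proof (induction n)
  case 0
  then show ?case using sets.sets_into_space[OF assms(4)] by (simp add: Int_absorb2)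
next
  case (Suc n)
  have "(\<tau> ^^ n) -` A \<inter> space M \<in> sets M"
    by (rule measurable_sets[OF measurable_compose_n[OF assms(1)] assms(4)])
  moreover have "(\<tau> ^^ Suc n) -` A \<inter> space M = \<tau> -` ((\<tau> ^^ n) -` A \<inter> space M) \<inter> space M"
    using measurable_space[OF assms(1)] by (auto simp: funpow_swap1)
  ultimately have "emeasure M ((\<tau> ^^ Suc n) -` A \<inter> space M) \<le> ennreal c * emeasure M ((\<tau> ^^ n) -` A \<inter> space M)"
    using assms(3) by metis
  also have "\<dots> \<le> ennreal c * (ennreal (c ^ n) * emeasure M A)"
    by (rule mult_left_mono[OF Suc]) simp
  also have "\<dots> = ennreal (c ^ Suc n) * emeasure M A"
    using assms(2) by (simp add: ennreal_mult mult.assoc)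
  finally show ?case .
qed

lemma comp_dyn_system_funpow_vimage:
  assumes "comp_dyn_system M \<phi> h \<tau>" "A \<in> sets M" "emeasure M A < \<infinity>"
  shows "(\<tau> ^^ n) -` A \<inter> space M \<in> sets M" "emeasure M ((\<tau> ^^ n) -` A \<inter> space M) < \<infinity>"
proof -
  note \<tau> = comp_dyn_systemD(4)[OF assms(1)]
  obtain c where "0 < c" "\<forall>A\<in>sets M. emeasure M (\<tau> -` A \<inter> space M) \<le> ennreal c * emeasure M A"
    using comp_dyn_systemD(5)[OF assms(1)] by blast
  then have "emeasure M ((\<tau> ^^ n) -` A \<inter> space M) \<le> ennreal (c ^ n) * emeasure M A"
    using emeasure_funpow_vimage_le[OF \<tau>] assms(2) by blast
  also have "\<dots> < \<infinity>" using assms(3) by (simp add: ennreal_mult_less_top)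
  finally show "emeasure M ((\<tau> ^^ n) -` A \<inter> space M) < \<infinity>" .
  show "(\<tau> ^^ n) -` A \<inter> space M \<in> sets M"
    by (rule measurable_sets[OF measurable_compose_n[OF \<tau>] assms(2)])
qed

lemma comp_dyn_system_OL_space_funpow:
  assumes "comp_dyn_system M \<phi> h \<tau>" "g \<in> OL_space M \<phi> h"
  shows "(\<lambda>x. g ((\<tau> ^^ n) x)) \<in> OL_space M \<phi> h"
proof (induction n)
  case (Suc n)
  then show ?case
    using comp_dyn_systemD(6)[OF assms(1) Suc] by (simp add: funpow_swap1)
qed (use assms(2) in simp)

section \<open>Positive expansivity\<close>

lemma halving_decay:
  fixes u :: "nat \<Rightarrow> ennreal"
  assumes "u 0 < \<infinity>" and halving: "\<And>n. u n < \<infinity> \<Longrightarrow> \<exists>m>0. 2 * u (n + m) \<le> u n"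
  shows "\<exists>n\<ge>k. 2 ^ k * u n \<le> u 0"
proof (induction k)
  case (Suc k)
  then obtain n where n: "k \<le> n" "2 ^ k * u n \<le> u 0" by blast
  have "u n \<noteq> \<infinity>"
  proof
    assume "u n = \<infinity>"
    then have "2 ^ k * u n = \<infinity>" by (simp add: ennreal_mult_top)
    then show False using n(2) assms(1) by (simp add: top_unique)
  qed
  then obtain m where m: "0 < m" "2 * u (n + m) \<le> u n"
    using halving[of n] by (auto simp: less_top)
  have "2 ^ Suc k * u (n + m) = 2 ^ k * (2 * u (n + m))" by (simp add: mult_ac)
  also have "\<dots> \<le> 2 ^ k * u n" using m(2) by (rule mult_left_mono) simp
  finally show ?case using n m(1) by (intro exI[of _ "n + m"]) simp
qed (auto intro: exI[of _ 0])

lemma INF_eq_0_if_halving: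
  fixes u :: "nat \<Rightarrow> ennreal"
  assumes "u 0 < \<infinity>" and "\<And>n. u n < \<infinity> \<Longrightarrow> \<exists>m>0. 2 * u (n + m) \<le> u n"
  shows "(INF n\<in>{1..}. u n) = 0"
proof -
  have bound: "2 ^ Suc k * (INF n\<in>{1..}. u n) \<le> u 0" for k
  proof -
    obtain n where n: "Suc k \<le> n" "2 ^ Suc k * u n \<le> u 0" using halving_decay[OF assms] by blast
    have "2 ^ Suc k * (INF n\<in>{1..}. u n) \<le> 2 ^ Suc k * u n"
      using n(1) by (intro mult_left_mono INF_lower) auto
    then show ?thesis using n(2) by (rule order.trans)
  qed
  obtain U where U: "u 0 = ennreal U" "0 \<le> U" using assms(1) by (cases "u 0") auto
  have "(INF n\<in>{1..}. u n) \<le> 2 ^ Suc 0 * (INF n\<in>{1..}. u n)"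
    by (simp add: mult_2 add_increasing)
  then obtain r where r: "(INF n\<in>{1..}. u n) = ennreal r" "0 \<le> r"
    using bound[of 0] U by (cases "INF n\<in>{1..}. u n") (auto simp: top_unique)
  have le: "r \<le> U / 2 ^ Suc k" for k
  proof -
    have "ennreal (2 ^ Suc k * r) = 2 ^ Suc k * ennreal r"
      using r(2) by (simp add: ennreal_mult ennreal_power[symmetric])
    then have "ennreal (2 ^ Suc k * r) \<le> ennreal U"
      using bound[of k] U r by simp
    then show ?thesis using U(2) by (simp add: field_simps)
  qed
  have "(\<lambda>k. U / 2 ^ Suc k) \<longlonglongrightarrow> 0"
    using LIMSEQ_Suc[OF LIMSEQ_divide_realpow_zero[of 2 U]] by simp
  then have "r \<le> 0"
    by (rule LIMSEQ_le_const) (use le in blast)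
  then show ?thesis using r by simp
qed

lemma pos_expansive_recip_norm_indicator_halves:
  assumes cds: "comp_dyn_system M \<phi> h \<tau>" and exp: "comp_pos_expansive M \<phi> h \<tau>"
    and B: "B \<in> sets M" "emeasure M B < \<infinity>" "recip_norm_indicator M \<phi> h B < \<infinity>"
  shows "\<exists>m>0. 2 * recip_norm_indicator M \<phi> h ((\<tau> ^^ m) -` B \<inter> space M)
    \<le> recip_norm_indicator M \<phi> h B"
proof -
  note orlicz = comp_dyn_systemD(2)[OF cds] and weight = comp_dyn_systemD(3)[OF cds]
  let ?\<psi> = "recip_norm_indicator M \<phi> h"
  define B' where "B' m = (\<tau> ^^ m) -` B \<inter> space M" for m
  have B': "B' m \<in> sets M" "emeasure M (B' m) < \<infinity>" for m
    unfolding B'_def using comp_dyn_system_funpow_vimage[OF cds B(1,2)] by auto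
  define a where "a = enn2real (?\<psi> B)"
  have a: "ennreal a = ?\<psi> B" "0 < a"
    using B recip_norm_indicator_pos[OF orlicz weight B(1,2)]
    by (auto simp: a_def ennreal_enn2real_if enn2real_positive_iff)
  have norm_iterate: "ennreal (OL_norm M \<phi> h (\<lambda>x. a * indicator B ((\<tau> ^^ m) x))) = ennreal a / ?\<psi> (B' m)"
    for m
  proof -
    have "OL_norm M \<phi> h (\<lambda>x. a * indicator B ((\<tau> ^^ m) x)) = OL_norm M \<phi> h (\<lambda>x. a * indicator (B' m) x)"
      by (intro OL_norm_cong) (simp add: B'_def indicator_def)
    then show ?thesis using OL_norm_indicator[OF orlicz weight B' a(2)] by simp
  qed
  have self: "?\<psi> B / ?\<psi> B = 1"
    using recip_norm_indicator_pos[OF orlicz weight B(1,2)] B(3) by simp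
  then have "OL_norm M \<phi> h (\<lambda>x. a * indicator B x) = 1"
    using OL_norm_indicator[OF orlicz weight B(1,2) a(2)] a(1) by simp
  then obtain m where "2 \<le> OL_norm M \<phi> h (\<lambda>x. a * indicator B ((\<tau> ^^ m) x))"
    using exp indicator_in_OL_space[OF orlicz B(1,2) weight a(2)]
    unfolding comp_pos_expansive_def by blast
  then have two: "2 \<le> ennreal a / ?\<psi> (B' m)"
    unfolding norm_iterate[symmetric] by (simp add: ennreal_leI)
  have "m \<noteq> 0"
  proof
    assume "m = 0"
    then have "B' m = B" using sets.sets_into_space[OF B(1)] by (auto simp: B'_def)
    then show False using two a(1) self by simp
  qed
  moreover have "2 * ?\<psi> (B' m) \<le> ?\<psi> B"
  proof (cases "?\<psi> (B' m)")
    case (real p)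
    then have "0 < p" using recip_norm_indicator_pos[OF orlicz weight B'[of m]] by simp
    then have "2 \<le> a / p" using two real a(2) by (simp add: divide_ennreal)
    then have "ennreal (2 * p) \<le> ennreal a" using \<open>0 < p\<close> by (intro ennreal_leI) (simp add: field_simps)
    then show ?thesis using real a(1) \<open>0 < p\<close> by (simp add: ennreal_mult)
  qed (use two in simp)
  ultimately show ?thesis unfolding B'_def by blast
qed

lemma pos_expansive_imp_INF_recip_norm_indicator:
  assumes cds: "comp_dyn_system M \<phi> h \<tau>" and exp: "comp_pos_expansive M \<phi> h \<tau>"
    and A: "A \<in> sets M" "0 < emeasure M A" "emeasure M A < \<infinity>"
  shows "(INF n\<in>{1..}. recip_norm_indicator M \<phi> h ((\<tau> ^^ n) -` A \<inter> space M)) = 0"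
proof (rule INF_eq_0_if_halving)
  have "(\<tau> ^^ 0) -` A \<inter> space M = A" using sets.sets_into_space[OF A(1)] by auto
  then show "recip_norm_indicator M \<phi> h ((\<tau> ^^ 0) -` A \<inter> space M) < \<infinity>"
    using recip_norm_indicator_finite[OF comp_dyn_systemD(3)[OF cds] A] by simp
next
  fix n assume "recip_norm_indicator M \<phi> h ((\<tau> ^^ n) -` A \<inter> space M) < \<infinity>"
  then show "\<exists>m>0. 2 * recip_norm_indicator M \<phi> h ((\<tau> ^^ (n + m)) -` A \<inter> space M)
      \<le> recip_norm_indicator M \<phi> h ((\<tau> ^^ n) -` A \<inter> space M)"
    using pos_expansive_recip_norm_indicator_halves[OF cds exp comp_dyn_system_funpow_vimage[OF cds A(1,3)]]
    by (simp add: funpow_vimage_add[OF comp_dyn_systemD(4)[OF cds]])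
qed

lemma INF_recip_norm_indicator_imp_pos_expansive:
  assumes cds: "comp_dyn_system M \<phi> h \<tau>"
    and INF: "\<And>A. A \<in> sets M \<Longrightarrow> 0 < emeasure M A \<Longrightarrow> emeasure M A < \<infinity> \<Longrightarrow>
      (INF n\<in>{1..}. recip_norm_indicator M \<phi> h ((\<tau> ^^ n) -` A \<inter> space M)) = 0"
  shows "comp_pos_expansive M \<phi> h \<tau>"
  unfolding comp_pos_expansive_def
proof (intro ballI impI)
  fix g assume g: "g \<in> OL_space M \<phi> h" "OL_norm M \<phi> h g = 1"
  note orlicz = comp_dyn_systemD(2)[OF cds] and weight = comp_dyn_systemD(3)[OF cds]
  have g_meas: "g \<in> borel_measurable M" using g(1) by (simp add: OL_space_def)
  moreover have "emeasure M {x \<in> space M. g x \<noteq> 0} \<noteq> 0"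
    using OL_norm_eq_0_if_null[OF orlicz g_meas] g(2) by auto
  ultimately obtain A e where A: "A \<in> sets M" "0 < emeasure M A" "emeasure M A < \<infinity>" "0 < e"
    and e: "\<And>x. x \<in> A \<Longrightarrow> e < \<bar>g x\<bar>"
    by (rule sigma_finite_measure.exists_finite_set_abs_gt[OF comp_dyn_systemD(1)[OF cds]]) blast
  define B where "B n = (\<tau> ^^ n) -` A \<inter> space M" for n
  have B: "B n \<in> sets M" "emeasure M (B n) < \<infinity>" for n
    unfolding B_def using comp_dyn_system_funpow_vimage[OF cds A(1,3)] by auto
  have "(INF n\<in>{1..}. recip_norm_indicator M \<phi> h (B n)) < ennreal (e / 2)"
    using INF[OF A(1-3)] A(4) by (simp add: B_def)
  then obtain n where "recip_norm_indicator M \<phi> h (B n) < ennreal (e / 2)"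
    by (auto simp: INF_less_iff)
  moreover have "0 < recip_norm_indicator M \<phi> h (B n)"
    using recip_norm_indicator_pos[OF orlicz weight B] .
  ultimately obtain p where p: "recip_norm_indicator M \<phi> h (B n) = ennreal p" "0 < p" "p < e / 2"
    by (cases "recip_norm_indicator M \<phi> h (B n)") (auto simp: ennreal_less_iff)
  have "ennreal (OL_norm M \<phi> h (\<lambda>x. e * indicator (B n) x)) = ennreal (e / p)"
    using OL_norm_indicator[OF orlicz weight B A(4)] p by (simp add: divide_ennreal A(4) less_imp_le)
  moreover have "2 < e / p" using p by (simp add: field_simps)
  ultimately have "ennreal 2 \<le> ennreal (OL_norm M \<phi> h (\<lambda>x. e * indicator (B n) x))"
    by (metis ennreal_leI less_imp_le)
  then have "2 \<le> OL_norm M \<phi> h (\<lambda>x. e * indicator (B n) x)"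
    unfolding ennreal_le_iff2 by linarith
  also have "\<dots> \<le> OL_norm M \<phi> h (\<lambda>x. g ((\<tau> ^^ n) x))"
    using A(4) e by (intro OL_norm_mono[OF orlicz comp_dyn_system_OL_space_funpow[OF cds g(1)]])
      (auto simp: B_def indicator_def less_imp_le)
  finally show "\<exists>n. 2 \<le> OL_norm M \<phi> h (\<lambda>x. g ((\<tau> ^^ n) x))" ..
qed

theorem mainTheorem2:
  assumes "comp_dyn_system M \<phi> h \<tau>"
  shows "comp_pos_expansive M \<phi> h \<tau> \<longleftrightarrow>
    (\<forall>A\<in>sets M. 0 < emeasure M A \<and> emeasure M A < \<infinity> \<longrightarrow>
       (INF n\<in>{1::nat..}. orlicz_inv_ext \<phi>
          (1 / Wint h (enn2real (emeasure M ((\<tau> ^^ n) -` A \<inter> space M))))) = 0)"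
  using pos_expansive_imp_INF_recip_norm_indicator[OF assms]
    INF_recip_norm_indicator_imp_pos_expansive[OF assms]
  unfolding recip_norm_indicator_def by blast

end
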